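(* Let $n\ge1$, let $\mathcal{T}$ be the completed tensor algebra on the $\mathbb{Q}$-vector space $H$ with basis $x_1,\dots,x_n$, let $x_0=-\sum_{k=1}^nx_k$, and let $\star$ be the operation on $\mathcal{T}_{\ge1}$ described in the context. Let $\Xi=x_1*x_2*\cdots*x_n=\log(e^{x_1}e^{x_2}\cdots e^{x_n})\in\mathcal{T}_{\ge1}$, and let $(-\Xi)^{-1}$ denote the inverse of $-\Xi$ with respect to $\star$. Then $$(-\Xi)^{-1}+x_0\,s(\Xi)\,x_0=x_0-\sum_{k>l}x_kx_l+\sum_{k=1}^n s(x_k)x_k^2=-\sum_{k>l}x_kx_l+\sum_{k=1}^n\frac{x_k^2}{e^{-x_k}-1},$$ where $s(z)=\frac{1}{e^{-z}-1}+\frac1z$ is substituted as a power series, products being those of $\mathcal{T}$.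
   Context: $\mathcal{T}=\prod_{m\ge0}H^{\otimes m}$ with filtration $\mathcal{T}_{\ge p}=\prod_{m\ge p}H^{\otimes m}$; products in $\mathcal{T}$ are written by juxtaposition. The continuous bilinear operation $\star:\mathcal{T}_{\ge1}\times\mathcal{T}_{\ge1}\to\mathcal{T}_{\ge1}$ is defined by $x_{i_1}\cdots x_{i_{l-1}}x_{i_l}\star x_{j_1}x_{j_2}\cdots x_{j_m}=-\delta_{i_lj_1}\,x_{i_1}\cdots x_{i_{l-1}}x_{j_1}x_{j_2}\cdots x_{j_m}$ for $l,m\ge1$, $1\le i_a,j_b\le n$. It is associative with unit $x_0$, and every $Z\in x_0+\mathcal{T}_{\ge2}$ has a unique inverse $Z^{-1}$ with $Z\star Z^{-1}=Z^{-1}\star Z=x_0$; note $-\Xi\in x_0+\mathcal{T}_{\ge2}$. $s(z)=\frac{1}{e^{-z}-1}+\frac1z=-\frac12-\frac1{12}z+\frac1{720}z^3-\cdots$. *)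

theory Defs
  imports Main "HOL-Library.Function_Algebras" "HOL-Computational_Algebra.Formal_Laurent_Series"
begin

text \<open>Elements of the completed tensor algebra on H = Q-span of x_1..x_n are represented
 by their coefficient functions on words (lists of letters); the letter k stands for x_k.
 Addition, negation, subtraction and finite sums are pointwise (Function_Algebras).\<close>

type_synonym tser = "nat list \<Rightarrow> rat"

definition in_T :: "nat \<Rightarrow> tser \<Rightarrow> bool" where
  "in_T n a \<longleftrightarrow> (\<forall>w. \<not> set w \<subseteq> {1..n} \<longrightarrow> a w = 0)"

definition tone :: tser where
  "tone w = (if w = [] then 1 else 0)"

definition gen :: "nat \<Rightarrow> tser" where
  "gen k w = (if w = [k] then 1 else 0)"

definition tmul :: "tser \<Rightarrow> tser \<Rightarrow> tser" where
  "tmul a b w = (\<Sum>i\<le>length w. a (take i w) * b (drop i w))"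

fun tpow :: "tser \<Rightarrow> nat \<Rightarrow> tser" where
  "tpow a 0 = tone"
| "tpow a (Suc k) = tmul a (tpow a k)"

definition tsubst :: "(nat \<Rightarrow> rat) \<Rightarrow> tser \<Rightarrow> tser" where
  "tsubst c a w = (\<Sum>k\<le>length w. c k * tpow a k w)"

definition texp :: "tser \<Rightarrow> tser" where
  "texp a = tsubst (\<lambda>k. 1 / of_nat (fact k)) a"

definition tlog :: "tser \<Rightarrow> tser" where
  "tlog b = tsubst (\<lambda>k. if k = 0 then 0 else (-1) ^ (k + 1) / of_nat k) (b - tone)"

definition x0 :: "nat \<Rightarrow> tser" where
  "x0 n = - (\<Sum>k\<in>{1..n}. gen k)"

definition Xi :: "nat \<Rightarrow> tser" where
  "Xi n = tlog (foldr tmul (map (\<lambda>k. texp (gen k)) [1..<n+1]) tone)"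

text \<open>the operation star: (u x_i) star (x_j v) = - delta_{ij} u x_j v, extended bilinearly
 and continuously; only coefficients on nonempty words enter.\<close>
definition star :: "tser \<Rightarrow> tser \<Rightarrow> tser" where
  "star a b w = (\<Sum>i<length w. - a (take i w @ [w ! i]) * b (drop i w))"

definition star_inv :: "nat \<Rightarrow> tser \<Rightarrow> tser" where
  "star_inv n Y = (THE Z. in_T n Z \<and> Z [] = 0 \<and> star Z Y = x0 n \<and> star Y Z = x0 n)"

text \<open>coefficients of s(z) = 1/(e^{-z}-1) + 1/z as a formal (Laurent, in fact power) series\<close>
definition s_coeff :: "nat \<Rightarrow> rat" where
  "s_coeff k = fls_nth (inverse (fps_to_fls (fps_exp (-1) - 1)) + fls_X_inv) (int k)"

definition q_coeff :: "nat \<Rightarrow> rat" where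
  "q_coeff k = fls_nth (fls_X ^ 2 * inverse (fps_to_fls (fps_exp (-1) - 1))) (int k)"

end

theory Submission
  imports Defs
begin

text \<open>The candidate inverse is \<open>Z = R - x\<^sub>0 s(\<Xi>) x\<^sub>0\<close>, where \<open>R\<close> is the asserted right-hand side.
  Cutting words at one letter gives \<open>a \<star> b = -\<Sum>\<^sub>i (a x\<^sub>i\<^sup>-\<^sup>1) x\<^sub>i (x\<^sub>i\<^sup>-\<^sup>1 b)\<close> in terms of right
  and left quotients, so \<open>x\<^sub>0 = -\<Sum> x\<^sub>i\<close> is a unit for \<open>\<star>\<close> even as a factor of a product, and
  \<open>x\<^sub>0 s(\<Xi>) x\<^sub>0 \<star> \<Xi> = x\<^sub>0 s(\<Xi>) \<Xi>\<close>. With \<open>E = e\<^sup>x\<^sup>1\<cdots>e\<^sup>x\<^sup>n\<close> and \<open>\<Xi> = log E\<close>, the quotients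
  of \<open>\<Xi>\<close> follow from those of \<open>E\<close>, and the sum over \<open>i\<close> in \<open>R \<star> \<Xi>\<close> telescopes, by
  \<open>(1 - s(x) x)(e\<^sup>x - 1) = x e\<^sup>x\<close>, to \<open>-x\<^sub>0 E \<Xi>/(E - 1)\<close>. Hence \<open>Z \<star> (-\<Xi>) = x\<^sub>0\<close> amounts to
  \<open>E \<Xi>/(E - 1) + s(\<Xi>) \<Xi> = 1\<close>, which is the definition of \<open>s\<close> since \<open>e\<^sup>-\<^sup>\<Xi> = E\<^sup>-\<^sup>1\<close>; the other
  side is symmetric. A left inverse is unique by induction on the length of words. The second
  identity is \<open>s(z) z\<^sup>2 - z = z\<^sup>2/(e\<^sup>-\<^sup>z - 1)\<close>.\<close>

lemma sum_fun_apply: "(\<Sum>k\<in>A. f k) w = (\<Sum>k\<in>A. f k w)"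
  by (induction A rule: infinite_finite_induct) auto

definition tscale :: "rat \<Rightarrow> tser \<Rightarrow> tser" where
  "tscale c a = (\<lambda>w. c * a w)"

lemma tscale_apply [simp]: "tscale c a w = c * a w"
  by (simp add: tscale_def)

lemma tscale_0 [simp]: "tscale 0 a = 0"
  by (rule ext) simp

lemma tscale_1 [simp]: "tscale 1 a = a"
  by (rule ext) simp

lemma tone_Nil [simp]: "tone [] = 1" and tone_Cons [simp]: "tone (x # w) = 0"
  by (simp_all add: tone_def)

lemma gen_Nil [simp]: "gen k [] = 0"
  by (simp add: gen_def)

lemma tmul_Nil [simp]: "tmul a b [] = a [] * b []"
  by (simp add: tmul_def)

lemma tmul_Cons: "tmul a b (x # w) = a [] * b (x # w) + tmul (\<lambda>v. a (x # v)) b w"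
  unfolding tmul_def by (simp del: sum.atMost_Suc add: sum.atMost_Suc_shift)

lemma tmul_snoc: "tmul a b (w @ [x]) = tmul a (\<lambda>v. b (v @ [x])) w + a (w @ [x]) * b []"
proof -
  have "tmul a b (w @ [x]) = (\<Sum>i\<le>length w. a (take i (w @ [x])) * b (drop i (w @ [x])))
      + a (w @ [x]) * b []"
    by (simp add: tmul_def)
  also have "(\<Sum>i\<le>length w. a (take i (w @ [x])) * b (drop i (w @ [x])))
      = (\<Sum>i\<le>length w. a (take i w) * b (drop i w @ [x]))"
    by (rule sum.cong) auto
  finally show ?thesis
    by (simp add: tmul_def)
qed

lemma tmul_add_left: "tmul (a + b) c = tmul a c + tmul b c"
  by (rule ext) (simp add: tmul_def algebra_simps sum.distrib)

lemma tmul_add_right: "tmul a (b + c) = tmul a b + tmul a c"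
  by (rule ext) (simp add: tmul_def algebra_simps sum.distrib)

lemma tmul_diff_left: "tmul (a - b) c = tmul a c - tmul b c"
  by (rule ext) (simp add: tmul_def algebra_simps sum_subtractf)

lemma tmul_diff_right: "tmul a (b - c) = tmul a b - tmul a c"
  by (rule ext) (simp add: tmul_def algebra_simps sum_subtractf)

lemma tmul_uminus_left: "tmul (- a) c = - tmul a c"
  by (rule ext) (simp add: tmul_def sum_negf)

lemma tmul_uminus_right: "tmul a (- c) = - tmul a c"
  by (rule ext) (simp add: tmul_def sum_negf)

lemma tmul_zero_left [simp]: "tmul 0 c = 0"
  by (rule ext) (simp add: tmul_def)

lemma tmul_zero_right [simp]: "tmul a 0 = 0"
  by (rule ext) (simp add: tmul_def)

lemma tmul_tscale_left: "tmul (tscale r a) c = tscale r (tmul a c)"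
  by (rule ext) (simp add: tmul_def sum_distrib_left algebra_simps)

lemma tmul_sum_left: "tmul (\<Sum>k\<in>A. f k) c = (\<Sum>k\<in>A. tmul (f k) c)"
  by (rule ext)
    (simp add: tmul_def sum_fun_apply sum_distrib_right sum_distrib_left sum.swap[of _ A])

lemma tmul_sum_right: "tmul c (\<Sum>k\<in>A. f k) = (\<Sum>k\<in>A. tmul c (f k))"
  by (rule ext)
    (simp add: tmul_def sum_fun_apply sum_distrib_right sum_distrib_left sum.swap[of _ A])

lemma tmul_assoc: "tmul (tmul a b) c = tmul a (tmul b c)"
proof (rule ext)
  fix w :: "nat list"
  show "tmul (tmul a b) c w = tmul a (tmul b c) w"
  proof (induction w arbitrary: a)
    case Nil
    then show ?case by simp
  next
    case (Cons x w)
    have "(\<lambda>v. tmul a b (x # v)) = tscale (a []) (\<lambda>v. b (x # v)) + tmul (\<lambda>v. a (x # v)) b"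
      by (rule ext) (simp add: tmul_Cons)
    then have "tmul (tmul a b) c (x # w)
        = a [] * b [] * c (x # w) + a [] * tmul (\<lambda>v. b (x # v)) c w
          + tmul (\<lambda>v. a (x # v)) (tmul b c) w"
      by (simp add: tmul_Cons tmul_add_left tmul_tscale_left Cons)
    then show ?case
      by (simp add: tmul_Cons algebra_simps)
  qed
qed

lemma tmul_tone_left [simp]: "tmul tone a = a"
proof (rule ext)
  fix w :: "nat list"
  show "tmul tone a w = a w"
    by (cases w) (simp_all add: tmul_Cons zero_fun_def[symmetric])
qed

lemma tmul_tone_right [simp]: "tmul a tone = a"
proof (rule ext)
  fix w :: "nat list"
  show "tmul a tone w = a w"
    by (induction w arbitrary: a) (simp_all add: tmul_Cons)
qed

lemma tpow_add: "tpow a (k + m) = tmul (tpow a k) (tpow a m)"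
  by (induction k) (simp_all add: tmul_assoc)

lemma tpow_Suc_right: "tpow a (Suc k) = tmul (tpow a k) a"
  using tpow_add[of a k 1] by simp

lemma tpow_eq_0:
  assumes "a [] = 0" and "length w < k"
  shows "tpow a k w = 0"
  using assms(2)
proof (induction k arbitrary: w)
  case 0
  then show ?case by simp
next
  case (Suc k)
  show ?case
  proof (cases w)
    case Nil
    then show ?thesis using assms(1) by simp
  next
    case (Cons x v)
    then have "tpow a (Suc k) w = tmul (\<lambda>u. a (x # u)) (tpow a k) v"
      using assms(1) by (simp add: tmul_Cons)
    also have "\<dots> = 0"
      unfolding tmul_def by (rule sum.neutral) (use Suc Cons in auto)
    finally show ?thesis .
  qed
qed

text \<open>Only meaningful for \<open>a\<close> without constant term: \<open>tsubst\<close> truncates at the word length.\<close>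

definition tsubst_fps :: "rat fps \<Rightarrow> tser \<Rightarrow> tser" where
  "tsubst_fps f a = tsubst (fps_nth f) a"

lemma tsubst_fps_apply:
  assumes "a [] = 0" and "length w \<le> N"
  shows "tsubst_fps f a w = (\<Sum>k\<le>N. f $ k * tpow a k w)"
  unfolding tsubst_fps_def tsubst_def
  by (rule sum.mono_neutral_left) (use assms tpow_eq_0 in auto)

lemma tsubst_fps_Nil: "a [] = 0 \<Longrightarrow> tsubst_fps f a [] = f $ 0"
  by (simp add: tsubst_fps_def tsubst_def)

lemma tsubst_fps_add: "tsubst_fps (f + g) a = tsubst_fps f a + tsubst_fps g a"
  by (rule ext) (simp add: tsubst_fps_def tsubst_def algebra_simps sum.distrib)

lemma tsubst_fps_diff: "tsubst_fps (f - g) a = tsubst_fps f a - tsubst_fps g a"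
  by (rule ext) (simp add: tsubst_fps_def tsubst_def algebra_simps sum_subtractf)

lemma tsubst_fps_X_power:
  assumes "a [] = 0"
  shows "tsubst_fps (fps_X ^ k) a = tpow a k"
proof (rule ext)
  fix w :: "nat list"
  have "tsubst_fps (fps_X ^ k) a w = (\<Sum>j\<le>max k (length w). (fps_X ^ k) $ j * tpow a j w)"
    by (rule tsubst_fps_apply) (use assms in auto)
  also have "\<dots> = tpow a k w"
    by (simp add: fps_X_power_iff if_distrib[of "\<lambda>x. x * _"] cong: if_cong)
  finally show "tsubst_fps (fps_X ^ k) a w = tpow a k w" .
qed

lemma tsubst_fps_one: "a [] = 0 \<Longrightarrow> tsubst_fps 1 a = tone"
  using tsubst_fps_X_power[of a 0] by simp

lemma tsubst_fps_X: "a [] = 0 \<Longrightarrow> tsubst_fps fps_X a = a"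
  using tsubst_fps_X_power[of a 1] by simp

lemma tmul_tsubst_fps_left:
  assumes "a [] = 0" and "length w \<le> N"
  shows "tmul (tsubst_fps f a) u w = (\<Sum>k\<le>N. f $ k * tmul (tpow a k) u w)"
proof -
  have "tmul (tsubst_fps f a) u w
      = (\<Sum>i\<le>length w. (\<Sum>k\<le>N. f $ k * tpow a k (take i w)) * u (drop i w))"
    unfolding tmul_def
    by (rule sum.cong) (use assms in \<open>auto simp: tsubst_fps_apply[where a=a and N=N]\<close>)
  then show ?thesis
    by (simp add: tmul_def sum_distrib_left sum_distrib_right sum.swap[of _ "{..N}"]
        algebra_simps)
qed

lemma tmul_tsubst_fps_right:
  assumes "a [] = 0" and "length w \<le> N"
  shows "tmul u (tsubst_fps f a) w = (\<Sum>k\<le>N. f $ k * tmul u (tpow a k) w)"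
proof -
  have "tmul u (tsubst_fps f a) w
      = (\<Sum>i\<le>length w. u (take i w) * (\<Sum>k\<le>N. f $ k * tpow a k (drop i w)))"
    unfolding tmul_def by (rule sum.cong) (use assms in \<open>auto simp: tsubst_fps_apply\<close>)
  then show ?thesis
    by (simp add: tmul_def sum_distrib_left sum_distrib_right sum.swap[of _ "{..N}"]
        algebra_simps)
qed

lemma tsubst_fps_mult:
  assumes a: "a [] = 0"
  shows "tsubst_fps (f * g) a = tmul (tsubst_fps f a) (tsubst_fps g a)"
proof (rule ext)
  fix w :: "nat list"
  let ?N = "length w"
  have "tmul (tsubst_fps f a) (tsubst_fps g a) w
      = (\<Sum>k\<le>?N. f $ k * tmul (tpow a k) (tsubst_fps g a) w)"
    by (rule tmul_tsubst_fps_left) (use a in auto)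
  also have "\<dots> = (\<Sum>k\<le>?N. \<Sum>m\<le>?N. f $ k * g $ m * tpow a (k + m) w)"
    by (rule sum.cong)
      (simp_all add: tmul_tsubst_fps_right[where a=a and N="?N", OF a] sum_distrib_left
        algebra_simps tpow_add)
  also have "\<dots> = (\<Sum>(k, m)\<in>{(i, j). i + j \<le> ?N}. f $ k * g $ m * tpow a (k + m) w)"
    unfolding sum.cartesian_product
    by (rule sum.mono_neutral_right) (auto, metis a not_le tpow_eq_0)
  also have "\<dots> = (\<Sum>j\<le>?N. \<Sum>i\<le>j. f $ i * g $ (j - i) * tpow a (i + (j - i)) w)"
    by (rule sum.triangle_reindex_eq)
  also have "\<dots> = tsubst_fps (f * g) a w"
    by (simp add: tsubst_fps_def tsubst_def fps_mult_nth atLeast0AtMost sum_distrib_right)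
  finally show "tsubst_fps (f * g) a w = tmul (tsubst_fps f a) (tsubst_fps g a) w" ..
qed

lemma tsubst_fps_compose:
  assumes a: "a [] = 0" and g: "g $ 0 = 0"
  shows "tsubst_fps f (tsubst_fps g a) = tsubst_fps (f oo g) a"
proof (rule ext)
  fix w :: "nat list"
  let ?N = "length w"
  have pow: "tpow (tsubst_fps g a) k = tsubst_fps (g ^ k) a" for k
    by (induction k) (simp_all add: tsubst_fps_one tsubst_fps_mult a)
  have "tsubst_fps f (tsubst_fps g a) w = (\<Sum>k\<le>?N. f $ k * tsubst_fps (g ^ k) a w)"
    by (simp add: tsubst_fps_def[of f] tsubst_def pow)
  also have "\<dots> = (\<Sum>k\<le>?N. \<Sum>j\<le>?N. f $ k * (g ^ k) $ j * tpow a j w)"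
    by (rule sum.cong[OF refl])
      (simp add: tsubst_fps_apply[where a=a and N="?N", OF a] sum_distrib_left mult.assoc)
  also have "\<dots> = (\<Sum>j\<le>?N. (\<Sum>k\<le>?N. f $ k * (g ^ k) $ j) * tpow a j w)"
    by (subst sum.swap) (simp add: sum_distrib_right)
  also have "\<dots> = (\<Sum>j\<le>?N. (f oo g) $ j * tpow a j w)"
  proof (rule sum.cong)
    fix j
    assume "j \<in> {..?N}"
    then have "(\<Sum>k\<le>?N. f $ k * (g ^ k) $ j) = (\<Sum>k = 0..j. f $ k * (g ^ k) $ j)"
      by (intro sum.mono_neutral_right) (auto simp: startsby_zero_power_prefix[OF g])
    then show "(\<Sum>k\<le>?N. f $ k * (g ^ k) $ j) * tpow a j w = (f oo g) $ j * tpow a j w"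
      by (simp add: fps_compose_nth)
  qed simp
  also have "\<dots> = tsubst_fps (f oo g) a w"
    by (simp add: tsubst_fps_def tsubst_def)
  finally show "tsubst_fps f (tsubst_fps g a) w = tsubst_fps (f oo g) a w" .
qed

section \<open>Left and right quotients\<close>

definition lquot :: "nat \<Rightarrow> tser \<Rightarrow> tser" where
  "lquot x a = (\<lambda>v. a (x # v))"

definition rquot :: "nat \<Rightarrow> tser \<Rightarrow> tser" where
  "rquot x a = (\<lambda>v. a (v @ [x]))"

lemma lquot_add: "lquot x (a + b) = lquot x a + lquot x b"
  by (rule ext) (simp add: lquot_def)

lemma lquot_diff: "lquot x (a - b) = lquot x a - lquot x b"
  by (rule ext) (simp add: lquot_def)

lemma lquot_uminus: "lquot x (- a) = - lquot x a"
  by (rule ext) (simp add: lquot_def)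

lemma lquot_sum: "lquot x (\<Sum>k\<in>A. f k) = (\<Sum>k\<in>A. lquot x (f k))"
  by (rule ext) (simp add: lquot_def sum_fun_apply)

lemma rquot_add: "rquot x (a + b) = rquot x a + rquot x b"
  by (rule ext) (simp add: rquot_def)

lemma rquot_diff: "rquot x (a - b) = rquot x a - rquot x b"
  by (rule ext) (simp add: rquot_def)

lemma rquot_uminus: "rquot x (- a) = - rquot x a"
  by (rule ext) (simp add: rquot_def)

lemma rquot_sum: "rquot x (\<Sum>k\<in>A. f k) = (\<Sum>k\<in>A. rquot x (f k))"
  by (rule ext) (simp add: rquot_def sum_fun_apply)

lemma lquot_tone [simp]: "lquot x tone = 0"
  by (rule ext) (simp add: lquot_def)

lemma rquot_tone [simp]: "rquot x tone = 0"
  by (rule ext) (simp add: rquot_def tone_def)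

lemma lquot_gen: "lquot x (gen k) = (if x = k then tone else 0)"
  by (rule ext) (auto simp: lquot_def gen_def tone_def)

lemma rquot_gen: "rquot x (gen k) = (if x = k then tone else 0)"
  by (rule ext) (auto simp: rquot_def gen_def tone_def)

lemma lquot_tmul: "lquot x (tmul a b) = tmul (lquot x a) b + tscale (a []) (lquot x b)"
  by (rule ext) (simp add: lquot_def tmul_Cons)

lemma rquot_tmul: "rquot x (tmul a b) = tmul a (rquot x b) + tscale (b []) (rquot x a)"
  by (rule ext) (simp add: rquot_def tmul_snoc)

lemma lquot_tsubst_fps:
  assumes a: "a [] = 0"
  shows "lquot x (tsubst_fps f a) = tmul (lquot x a) (tsubst_fps (fps_shift 1 f) a)"
proof (rule ext)
  fix w :: "nat list"
  have "lquot x (tsubst_fps f a) w = (\<Sum>k\<le>Suc (length w). f $ k * tpow a k (x # w))"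
    by (simp add: lquot_def tsubst_fps_def tsubst_def)
  also have "\<dots> = (\<Sum>k\<le>length w. f $ Suc k * tpow a (Suc k) (x # w))"
    by (simp del: sum.atMost_Suc add: sum.atMost_Suc_shift)
  also have "\<dots> = (\<Sum>k\<le>length w. fps_shift 1 f $ k * tmul (lquot x a) (tpow a k) w)"
    by (rule sum.cong) (simp_all add: tmul_Cons a lquot_def)
  also have "\<dots> = tmul (lquot x a) (tsubst_fps (fps_shift 1 f) a) w"
    by (rule tmul_tsubst_fps_right[symmetric]) (use a in auto)
  finally show "lquot x (tsubst_fps f a) w = tmul (lquot x a) (tsubst_fps (fps_shift 1 f) a) w" .
qed

lemma rquot_tsubst_fps:
  assumes a: "a [] = 0"
  shows "rquot x (tsubst_fps f a) = tmul (tsubst_fps (fps_shift 1 f) a) (rquot x a)"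
proof (rule ext)
  fix w :: "nat list"
  have "rquot x (tsubst_fps f a) w = (\<Sum>k\<le>Suc (length w). f $ k * tpow a k (w @ [x]))"
    by (simp add: rquot_def tsubst_fps_def tsubst_def)
  also have "\<dots> = (\<Sum>k\<le>length w. f $ Suc k * tpow a (Suc k) (w @ [x]))"
    by (simp del: sum.atMost_Suc add: sum.atMost_Suc_shift tone_def)
  also have "\<dots> = (\<Sum>k\<le>length w. fps_shift 1 f $ k * tmul (tpow a k) (rquot x a) w)"
    by (rule sum.cong)
      (simp_all del: tpow.simps add: tpow_Suc_right tmul_snoc a rquot_def tone_def)
  also have "\<dots> = tmul (tsubst_fps (fps_shift 1 f) a) (rquot x a) w"
    by (rule tmul_tsubst_fps_left[symmetric]) (use a in auto)
  finally show "rquot x (tsubst_fps f a) w = tmul (tsubst_fps (fps_shift 1 f) a) (rquot x a) w" .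
qed

lemma lquot_tsubst_fps_gen:
  "lquot i (tsubst_fps f (gen k)) = (if i = k then tsubst_fps (fps_shift 1 f) (gen k) else 0)"
  by (simp add: lquot_tsubst_fps lquot_gen)

lemma rquot_tsubst_fps_gen:
  "rquot i (tsubst_fps f (gen k)) = (if i = k then tsubst_fps (fps_shift 1 f) (gen k) else 0)"
  by (simp add: rquot_tsubst_fps rquot_gen)

lemma tmul_gen_Cons: "tmul (gen i) v (x # w) = (if x = i then v w else 0)"
proof -
  have "(\<lambda>u. gen i (x # u)) = lquot x (gen i)"
    by (simp add: lquot_def)
  then show ?thesis
    by (simp add: tmul_Cons lquot_gen)
qed

lemma tmul_gen_snoc: "tmul v (gen i) (w @ [x]) = (if x = i then v w else 0)"
proof -
  have "(\<lambda>u. gen i (u @ [x])) = rquot x (gen i)"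
    by (simp add: rquot_def)
  then show ?thesis
    by (simp add: tmul_snoc rquot_gen)
qed

lemma tmul_tmul_gen_apply:
  "tmul u (tmul (gen i) v) w
    = (\<Sum>j<length w. if w ! j = i then u (take j w) * v (drop (Suc j) w) else 0)"
proof -
  have "tmul u (tmul (gen i) v) w = (\<Sum>j<length w. u (take j w) * tmul (gen i) v (drop j w))"
    by (simp add: tmul_def lessThan_Suc_atMost[symmetric])
  also have "\<dots> = (\<Sum>j<length w. if w ! j = i then u (take j w) * v (drop (Suc j) w) else 0)"
    by (rule sum.cong) (simp_all add: Cons_nth_drop_Suc[symmetric] tmul_gen_Cons)
  finally show ?thesis .
qed

lemma in_T_add: "in_T n a \<Longrightarrow> in_T n b \<Longrightarrow> in_T n (a + b)"
  by (simp add: in_T_def)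

lemma in_T_diff: "in_T n a \<Longrightarrow> in_T n b \<Longrightarrow> in_T n (a - b)"
  by (simp add: in_T_def)

lemma in_T_uminus: "in_T n a \<Longrightarrow> in_T n (- a)"
  by (simp add: in_T_def)

lemma in_T_sum: "(\<And>k. k \<in> A \<Longrightarrow> in_T n (f k)) \<Longrightarrow> in_T n (\<Sum>k\<in>A. f k)"
  by (simp add: in_T_def sum_fun_apply)

lemma in_T_tone: "in_T n tone"
  by (simp add: in_T_def tone_def)

lemma in_T_gen: "k \<in> {1..n} \<Longrightarrow> in_T n (gen k)"
  by (auto simp: in_T_def gen_def)

lemma in_T_tmul:
  assumes "in_T n a" and "in_T n b"
  shows "in_T n (tmul a b)"
  unfolding in_T_def
proof (intro allI impI)
  fix w :: "nat list"
  assume w: "\<not> set w \<subseteq> {1..n}"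
  show "tmul a b w = 0"
    unfolding tmul_def
  proof (rule sum.neutral, intro ballI)
    fix i
    have "set w = set (take i w) \<union> set (drop i w)"
      by (metis append_take_drop_id set_append)
    then have "\<not> set (take i w) \<subseteq> {1..n} \<or> \<not> set (drop i w) \<subseteq> {1..n}"
      using w by auto
    then show "a (take i w) * b (drop i w) = 0"
      using assms by (auto simp: in_T_def)
  qed
qed

lemma in_T_tpow: "in_T n a \<Longrightarrow> in_T n (tpow a k)"
  by (induction k) (simp_all add: in_T_tone in_T_tmul)

lemma in_T_tsubst: "in_T n a \<Longrightarrow> in_T n (tsubst c a)"
  using in_T_tpow unfolding in_T_def tsubst_def by (auto intro!: sum.neutral)

lemma in_T_tsubst_fps: "in_T n a \<Longrightarrow> in_T n (tsubst_fps f a)"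
  by (simp add: tsubst_fps_def in_T_tsubst)

lemma in_T_foldr_tmul: "(\<And>a. a \<in> set as \<Longrightarrow> in_T n a) \<Longrightarrow> in_T n (foldr tmul as tone)"
  by (induction as) (auto simp: in_T_tone intro: in_T_tmul)

lemma tser_decomp_left:
  assumes "in_T n b"
  shows "b = tscale (b []) tone + (\<Sum>i\<in>{1..n}. tmul (gen i) (lquot i b))"
proof (rule ext)
  fix w
  show "b w = (tscale (b []) tone + (\<Sum>i\<in>{1..n}. tmul (gen i) (lquot i b))) w"
  proof (cases w)
    case Nil
    then show ?thesis by (simp add: sum_fun_apply)
  next
    case (Cons x v)
    have "(\<Sum>i\<in>{1..n}. tmul (gen i) (lquot i b) (x # v)) = (if x \<in> {1..n} then b (x # v) else 0)"
      by (simp add: tmul_gen_Cons lquot_def if_distrib cong: if_cong)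
    also have "\<dots> = b (x # v)"
      using assms by (auto simp: in_T_def)
    finally show ?thesis
      using Cons by (simp add: sum_fun_apply)
  qed
qed

lemma tser_decomp_right:
  assumes "in_T n b"
  shows "b = tscale (b []) tone + (\<Sum>i\<in>{1..n}. tmul (rquot i b) (gen i))"
proof (rule ext)
  fix w
  show "b w = (tscale (b []) tone + (\<Sum>i\<in>{1..n}. tmul (rquot i b) (gen i))) w"
  proof (cases w rule: rev_exhaust)
    case Nil
    then show ?thesis by (simp add: sum_fun_apply)
  next
    case (snoc v x)
    have "(\<Sum>i\<in>{1..n}. tmul (rquot i b) (gen i) (v @ [x])) = (if x \<in> {1..n} then b (v @ [x]) else 0)"
      by (simp add: tmul_gen_snoc rquot_def if_distrib cong: if_cong)
    also have "\<dots> = b (v @ [x])"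
      using assms by (auto simp: in_T_def)
    finally show ?thesis
      using snoc by (simp add: sum_fun_apply tone_def)
  qed
qed

section \<open>The operation \<open>\<star>\<close>\<close>

lemma star_diff_left: "star (a - b) c = star a c - star b c"
  by (rule ext) (simp add: star_def sum_subtractf[symmetric] algebra_simps)

lemma star_diff_right: "star a (b - c) = star a b - star a c"
  by (rule ext) (simp add: star_def sum_subtractf[symmetric] algebra_simps)

lemma star_uminus_left: "star (- a) c = - star a c"
  by (rule ext) (simp add: star_def sum_negf[symmetric])

lemma star_uminus_right: "star a (- c) = - star a c"
  by (rule ext) (simp add: star_def sum_negf[symmetric])

lemma star_eq_sum_quot:
  assumes b: "in_T n b"
  shows "star a b = - (\<Sum>i\<in>{1..n}. tmul (rquot i a) (tmul (gen i) (lquot i b)))"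
proof (rule ext)
  fix w :: "nat list"
  let ?t = "\<lambda>i j. if w ! j = i then a (take j w @ [i]) * b (i # drop (Suc j) w) else 0"
  have "(\<Sum>i\<in>{1..n}. tmul (rquot i a) (tmul (gen i) (lquot i b)) w)
      = (\<Sum>i\<in>{1..n}. \<Sum>j<length w. ?t i j)"
    by (simp add: tmul_tmul_gen_apply rquot_def lquot_def)
  also have "\<dots> = (\<Sum>j<length w. \<Sum>i\<in>{1..n}. ?t i j)"
    by (rule sum.swap)
  also have "\<dots> = (\<Sum>j<length w. a (take j w @ [w ! j]) * b (drop j w))"
  proof (rule sum.cong)
    fix j
    assume "j \<in> {..<length w}"
    then have dj: "drop j w = w ! j # drop (Suc j) w"
      by (simp add: Cons_nth_drop_Suc)
    then have "w ! j \<notin> {1..n} \<Longrightarrow> b (drop j w) = 0"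
      using b unfolding in_T_def by (metis list.set_intros(1) subsetD)
    then show "(\<Sum>i\<in>{1..n}. ?t i j) = a (take j w @ [w ! j]) * b (drop j w)"
      by (auto simp: dj sum.delta)
  qed simp
  finally show "star a b w = (- (\<Sum>i\<in>{1..n}. tmul (rquot i a) (tmul (gen i) (lquot i b)))) w"
    by (simp add: star_def sum_fun_apply sum_negf)
qed

lemma x0_Nil: "x0 n [] = 0"
  by (simp add: x0_def sum_fun_apply)

lemma in_T_x0: "in_T n (x0 n)"
  unfolding x0_def by (intro in_T_uminus in_T_sum in_T_gen)

lemma lquot_x0: "i \<in> {1..n} \<Longrightarrow> lquot i (x0 n) = - tone"
  by (simp add: x0_def lquot_uminus lquot_sum lquot_gen)

lemma rquot_x0: "i \<in> {1..n} \<Longrightarrow> rquot i (x0 n) = - tone"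
  by (simp add: x0_def rquot_uminus rquot_sum rquot_gen)

lemma star_tmul_x0_left:
  assumes "in_T n b" and "b [] = 0"
  shows "star (tmul u (x0 n)) b = tmul u b"
proof -
  have "star (tmul u (x0 n)) b
      = - (\<Sum>i\<in>{1..n}. tmul (rquot i (tmul u (x0 n))) (tmul (gen i) (lquot i b)))"
    by (rule star_eq_sum_quot[OF assms(1)])
  also have "\<dots> = tmul u (\<Sum>i\<in>{1..n}. tmul (gen i) (lquot i b))"
    by (simp add: rquot_tmul rquot_x0 x0_Nil tmul_uminus_left tmul_uminus_right sum_negf
        tmul_sum_right zero_fun_def[symmetric] tscale_def)
  also have "(\<Sum>i\<in>{1..n}. tmul (gen i) (lquot i b)) = b"
    using tser_decomp_left[OF assms(1)] assms(2) by (simp add: tscale_def zero_fun_def[symmetric])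
  finally show ?thesis .
qed

lemma star_tmul_x0_right:
  assumes "in_T n a" and "a [] = 0" and "in_T n v"
  shows "star a (tmul (x0 n) v) = tmul a v"
proof -
  have "star a (tmul (x0 n) v)
      = - (\<Sum>i\<in>{1..n}. tmul (rquot i a) (tmul (gen i) (lquot i (tmul (x0 n) v))))"
    by (rule star_eq_sum_quot) (intro in_T_tmul in_T_x0 assms(3))
  also have "\<dots> = tmul (\<Sum>i\<in>{1..n}. tmul (rquot i a) (gen i)) v"
    by (simp add: lquot_tmul lquot_x0 x0_Nil tmul_uminus_left tmul_uminus_right sum_negf
        tmul_sum_left zero_fun_def[symmetric] tscale_def tmul_assoc)
  also have "(\<Sum>i\<in>{1..n}. tmul (rquot i a) (gen i)) = a"
    using tser_decomp_right[OF assms(1)] assms(2) by (simp add: tscale_def zero_fun_def[symmetric])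
  finally show ?thesis .
qed

text \<open>At a word \<open>w = v x\<close>, the only term of \<open>(D \<star> Y)(w)\<close> not involving a shorter
  prefix of \<open>w\<close> is \<open>-D(w) Y(x)\<close>.\<close>

lemma star_left_cancel:
  assumes D: "in_T n D" "D [] = 0" "star D Y = 0"
    and Y: "\<And>k. k \<in> {1..n} \<Longrightarrow> Y [k] \<noteq> 0"
  shows "D = 0"
proof (rule ext)
  fix w
  show "D w = 0 w"
  proof (induction w rule: length_induct)
    case (1 w)
    show ?case
    proof (cases w rule: rev_exhaust)
      case Nil
      then show ?thesis using D(2) by simp
    next
      case (snoc v x)
      have shorter: "D (take j w @ [w ! j]) = 0" if "j < length v" for j
      proof -
        have "take j w @ [w ! j] = take (Suc j) w"
          using that snoc by (simp add: take_Suc_conv_app_nth nth_append)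
        then show ?thesis
          using 1 that snoc by simp
      qed
      have "0 = star D Y w"
        using D(3) by simp
      also have "\<dots> = (\<Sum>j<length v. - D (take j w @ [w ! j]) * Y (drop j w)) - D w * Y [x]"
        by (simp add: star_def snoc)
      also have "\<dots> = - D w * Y [x]"
        by (simp add: shorter)
      finally have "D w * Y [x] = 0"
        by simp
      moreover have "x \<in> {1..n} \<Longrightarrow> Y [x] \<noteq> 0"
        by (rule Y)
      moreover have "x \<notin> {1..n} \<Longrightarrow> D w = 0"
        using D(1) snoc by (auto simp: in_T_def)
      ultimately show ?thesis
        by auto
    qed
  qed
qed

section \<open>Power series identities\<close>

definition negexp_quot :: "rat fps" where
  "negexp_quot = fps_shift 1 (fps_exp (-1) - 1)"

definition ln_quot :: "rat fps" where
  "ln_quot = fps_shift 1 (fps_ln 1)"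

definition s_fps :: "rat fps" where
  "s_fps = Abs_fps s_coeff"

definition q_fps :: "rat fps" where
  "q_fps = Abs_fps q_coeff"

lemma X_times_negexp_quot: "fps_X * negexp_quot = fps_exp (-1) - 1"
  unfolding negexp_quot_def by (intro fps_ext) (auto simp: fps_X_mult_nth)

lemma negexp_quot_nth_0: "negexp_quot $ 0 = -1"
  by (simp add: negexp_quot_def)

lemma inverse_negexp_quot: "inverse negexp_quot * negexp_quot = 1"
  by (simp add: inverse_mult_eq_1 negexp_quot_nth_0)

lemma fls_inverse_exp_neg_minus_1:
  "inverse (fps_to_fls (fps_exp (-1) - 1)) = fls_X_inv * fps_to_fls (inverse negexp_quot)"
proof -
  have "inverse (fps_to_fls (fps_exp (-1) - 1)) = inverse (fls_X * fps_to_fls negexp_quot)"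
    by (simp flip: X_times_negexp_quot add: fls_times_fps_to_fls)
  also have "\<dots> = fls_X_inv * fps_to_fls (inverse negexp_quot)"
    by (simp add: fls_inverse_X fls_inverse_fps_to_fls subdegree_eq_0_iff negexp_quot_nth_0)
  finally show ?thesis .
qed

lemma fls_X_inv_times_X: "fls_X_inv * (fls_X :: rat fls) = 1"
  by (simp flip: fls_inverse_X)

lemma s_fps_times_X: "s_fps * fps_X = inverse negexp_quot + 1"
proof -
  define c where "c = fps_shift 1 (inverse negexp_quot + 1)"
  have c: "fps_X * c = inverse negexp_quot + 1"
    unfolding c_def by (intro fps_ext) (auto simp: fps_X_mult_nth negexp_quot_nth_0)
  have "inverse (fps_to_fls (fps_exp (-1) - 1)) + fls_X_inv
      = fls_X_inv * fps_to_fls (inverse negexp_quot + 1)"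
    unfolding fls_inverse_exp_neg_minus_1 by (simp add: algebra_simps)
  also have "\<dots> = fls_X_inv * fls_X * fps_to_fls c"
    by (simp flip: c add: fls_times_fps_to_fls mult.assoc)
  finally have "s_fps = c"
    by (simp add: s_fps_def s_coeff_def fls_X_inv_times_X fps_ext)
  then show ?thesis
    using c by (simp add: mult.commute)
qed

lemma q_fps_eq: "q_fps = s_fps * fps_X ^ 2 - fps_X"
proof -
  have "fls_X ^ 2 * inverse (fps_to_fls (fps_exp (-1) - 1))
      = fls_X * (fls_X_inv * fls_X) * fps_to_fls (inverse negexp_quot)"
    unfolding fls_inverse_exp_neg_minus_1 by (simp add: power2_eq_square algebra_simps)
  also have "\<dots> = fps_to_fls (fps_X * inverse negexp_quot)"
    by (simp add: fls_X_inv_times_X fls_times_fps_to_fls)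
  finally have "q_fps = fps_X * inverse negexp_quot"
    by (simp add: q_fps_def q_coeff_def fps_ext)
  also have "\<dots> = (s_fps * fps_X) * fps_X - fps_X"
    unfolding s_fps_times_X by (simp add: algebra_simps)
  finally show ?thesis
    by (simp add: power2_eq_square mult.assoc)
qed

lemma s_fps_exp_identity: "(1 - s_fps * fps_X) * (fps_exp 1 - 1) = fps_X * fps_exp 1"
proof -
  have "fps_exp 1 * fps_exp (-1) = (1 :: rat fps)"
    by (simp flip: fps_exp_add_mult)
  then have e: "fps_exp 1 - 1 = - (fps_X * negexp_quot * fps_exp 1)"
    by (simp add: X_times_negexp_quot algebra_simps)
  have "(1 - s_fps * fps_X) * (fps_exp 1 - 1)
      = (- inverse negexp_quot) * (- (fps_X * negexp_quot * fps_exp 1))"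
    by (simp only: s_fps_times_X e) simp
  also have "\<dots> = (inverse negexp_quot * negexp_quot) * fps_X * fps_exp 1"
    by (simp add: algebra_simps)
  finally show ?thesis
    by (simp add: inverse_negexp_quot)
qed

lemma fps_ln_eq_X_times_ln_quot: "fps_ln 1 = fps_X * ln_quot"
  unfolding ln_quot_def by (intro fps_ext) (auto simp: fps_X_mult_nth)

lemma fps_exp_compose_ln: "fps_exp 1 oo fps_ln 1 = 1 + (fps_X :: rat fps)"
proof -
  have "(fps_exp 1 - 1) oo fps_ln 1 = (fps_X :: rat fps)"
    using fps_inv_fps_exp_compose(2)[of "1::rat"] by (simp add: fps_ln_fps_exp_inv)
  then show ?thesis
    by (simp add: fps_compose_sub_distrib algebra_simps)
qed

lemma inverse_one_plus_X: "inverse (1 + fps_X) * (1 + fps_X) = (1 :: rat fps)"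
  by (simp add: inverse_mult_eq_1)

text \<open>For \<open>L = log(1+z)\<close> and \<open>B = (e\<^sup>-\<^sup>z - 1)/z\<close>: \<open>(s(z) z) \<circ> L = 1/(B \<circ> L) + 1\<close>, while
  \<open>L (B \<circ> L) = e\<^sup>-\<^sup>L - 1 = -z/(1+z)\<close>.\<close>

lemma s_fps_ln_identity: "(1 + fps_X) * ln_quot + (s_fps oo fps_ln 1) * fps_ln 1 = 1"
proof -
  let ?L = "fps_ln 1 :: rat fps" and ?BL = "negexp_quot oo fps_ln 1"
  have "(s_fps oo ?L) * ?L = (s_fps * fps_X) oo ?L"
    by (simp add: fps_compose_mult_distrib)
  also have "\<dots> = inverse ?BL + 1"
    by (simp add: s_fps_times_X fps_compose_add_distrib fps_inverse_compose negexp_quot_nth_0)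
  finally have sL: "(s_fps oo ?L) * ?L = inverse ?BL + 1" .
  have "fps_X * (ln_quot * ?BL) = (fps_X * negexp_quot) oo ?L"
    by (simp add: fps_compose_mult_distrib flip: fps_ln_eq_X_times_ln_quot mult.assoc)
  also have "\<dots> = inverse (1 + fps_X) - 1"
    by (simp add: X_times_negexp_quot fps_compose_sub_distrib fps_exp_neg fps_inverse_compose
        flip: fps_exp_compose_ln)
  also have "\<dots> = fps_X * (- inverse (1 + fps_X))"
    using inverse_one_plus_X by (simp add: algebra_simps)
  finally have "ln_quot * ?BL = - inverse (1 + fps_X)"
    using mult_left_cancel[of "fps_X :: rat fps"] by (simp only: fps_X_neq_zero not_False_eq_True)
  then have "(- ((1 + fps_X) * ln_quot)) * ?BL = 1"
    using inverse_one_plus_X by (simp add: algebra_simps)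
  then have "inverse ?BL = - ((1 + fps_X) * ln_quot)"
    using fps_inverse_unique[of ?BL] by (simp add: mult.commute)
  with sL show ?thesis
    by simp
qed

lemma texp_eq_tsubst_fps: "texp a = tsubst_fps (fps_exp 1) a"
  by (simp add: texp_def tsubst_fps_def fps_exp_def Abs_fps_inverse)

lemma tsubst_s_coeff: "tsubst s_coeff a = tsubst_fps s_fps a"
  by (simp add: tsubst_fps_def s_fps_def Abs_fps_inverse)

lemma tsubst_q_coeff: "tsubst q_coeff a = tsubst_fps q_fps a"
  by (simp add: tsubst_fps_def q_fps_def Abs_fps_inverse)

lemma tsubst_fps_gen_mult:
  "tsubst_fps (f * g) (gen k) = tmul (tsubst_fps f (gen k)) (tsubst_fps g (gen k))"
  by (simp add: tsubst_fps_mult)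

lemma tsubst_fps_one_gen: "tsubst_fps 1 (gen k) = tone"
  by (simp add: tsubst_fps_one)

lemma tsubst_fps_X_gen: "tsubst_fps fps_X (gen k) = gen k"
  by (simp add: tsubst_fps_X)

definition exp_quot_gen :: "nat \<Rightarrow> tser" where
  "exp_quot_gen k = tsubst_fps (fps_shift 1 (fps_exp 1)) (gen k)"

definition s_times_gen :: "nat \<Rightarrow> tser" where
  "s_times_gen k = tsubst_fps (s_fps * fps_X) (gen k)"

lemma texp_gen_Nil [simp]: "texp (gen k) [] = 1"
  by (simp add: texp_eq_tsubst_fps tsubst_fps_Nil)

lemma exp_quot_gen_Nil [simp]: "exp_quot_gen k [] = 1"
  by (simp add: exp_quot_gen_def tsubst_fps_Nil)

lemma X_times_exp_quot: "fps_X * fps_shift 1 (fps_exp 1) = fps_exp 1 - (1 :: rat fps)"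
  by (intro fps_ext) (auto simp: fps_X_mult_nth)

lemma gen_tmul_exp_quot_gen: "tmul (gen i) (exp_quot_gen i) = texp (gen i) - tone"
proof -
  have "tmul (gen i) (exp_quot_gen i) = tsubst_fps (fps_X * fps_shift 1 (fps_exp 1)) (gen i)"
    by (simp only: tsubst_fps_gen_mult tsubst_fps_X_gen exp_quot_gen_def)
  then show ?thesis
    by (simp only: X_times_exp_quot tsubst_fps_diff tsubst_fps_one_gen texp_eq_tsubst_fps)
qed

lemma exp_quot_gen_tmul_gen: "tmul (exp_quot_gen i) (gen i) = texp (gen i) - tone"
proof -
  have "tmul (exp_quot_gen i) (gen i) = tsubst_fps (fps_X * fps_shift 1 (fps_exp 1)) (gen i)"
    by (simp only: mult.commute[of fps_X] tsubst_fps_gen_mult tsubst_fps_X_gen exp_quot_gen_def)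
  then show ?thesis
    by (simp only: X_times_exp_quot tsubst_fps_diff tsubst_fps_one_gen texp_eq_tsubst_fps)
qed

lemma s_times_gen_exp:
  "tmul (tone - s_times_gen i) (texp (gen i) - tone) = tmul (gen i) (texp (gen i))"
proof -
  have "tmul (tone - s_times_gen i) (texp (gen i) - tone)
      = tsubst_fps ((1 - s_fps * fps_X) * (fps_exp 1 - 1)) (gen i)"
    by (simp only: tsubst_fps_gen_mult tsubst_fps_diff tsubst_fps_one_gen s_times_gen_def
        texp_eq_tsubst_fps)
  then show ?thesis
    by (simp only: s_fps_exp_identity tsubst_fps_gen_mult tsubst_fps_X_gen texp_eq_tsubst_fps)
qed

lemma exp_s_times_gen:
  "tmul (texp (gen i) - tone) (tone - s_times_gen i) = tmul (texp (gen i)) (gen i)"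
proof -
  have "tmul (texp (gen i) - tone) (tone - s_times_gen i)
      = tsubst_fps ((1 - s_fps * fps_X) * (fps_exp 1 - 1)) (gen i)"
    by (simp only: mult.commute[of "1 - s_fps * fps_X"] tsubst_fps_gen_mult tsubst_fps_diff
        tsubst_fps_one_gen s_times_gen_def texp_eq_tsubst_fps)
  then show ?thesis
    by (simp only: s_fps_exp_identity mult.commute[of fps_X] tsubst_fps_gen_mult tsubst_fps_X_gen
        texp_eq_tsubst_fps)
qed

lemma lquot_texp_gen: "lquot i (texp (gen k)) = (if i = k then exp_quot_gen k else 0)"
  by (simp add: texp_eq_tsubst_fps lquot_tsubst_fps lquot_gen exp_quot_gen_def)

lemma rquot_texp_gen: "rquot i (texp (gen k)) = (if i = k then exp_quot_gen k else 0)"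
  by (simp add: texp_eq_tsubst_fps rquot_tsubst_fps rquot_gen exp_quot_gen_def)

definition exp_prod :: "nat \<Rightarrow> nat \<Rightarrow> tser" where
  "exp_prod i j = foldr tmul (map (\<lambda>k. texp (gen k)) [i..<j]) tone"

lemma exp_prod_empty: "j \<le> i \<Longrightarrow> exp_prod i j = tone"
  by (simp add: exp_prod_def)

lemma exp_prod_Cons: "i < j \<Longrightarrow> exp_prod i j = tmul (texp (gen i)) (exp_prod (Suc i) j)"
  by (simp add: exp_prod_def upt_conv_Cons)

lemma exp_prod_snoc: "i \<le> j \<Longrightarrow> exp_prod i (Suc j) = tmul (exp_prod i j) (texp (gen j))"
proof -
  have foldr_tmul: "foldr tmul as b = tmul (foldr tmul as tone) b" for as b
    by (induction as) (simp_all add: tmul_assoc)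
  show "i \<le> j \<Longrightarrow> ?thesis"
    by (simp add: exp_prod_def foldr_tmul[of _ "texp (gen j)"])
qed

lemma exp_prod_Nil [simp]: "exp_prod i j [] = 1"
proof (induction j)
  case (Suc j)
  then show ?case
    by (cases "i \<le> j") (simp_all add: exp_prod_empty exp_prod_snoc)
qed (simp add: exp_prod_empty)

lemma in_T_exp_prod: "1 \<le> i \<Longrightarrow> j \<le> Suc n \<Longrightarrow> in_T n (exp_prod i j)"
  unfolding exp_prod_def
  by (rule in_T_foldr_tmul) (auto simp: texp_eq_tsubst_fps intro!: in_T_tsubst_fps in_T_gen)

lemma lquot_exp_prod:
  "i \<le> j \<Longrightarrow> lquot k (exp_prod i j)
    = (if i \<le> k \<and> k < j then tmul (exp_quot_gen k) (exp_prod (Suc k) j) else 0)"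
proof (induction i rule: inc_induct)
  case base
  then show ?case by (auto simp: exp_prod_empty)
next
  case (step i)
  then show ?case
    by (auto simp: exp_prod_Cons lquot_tmul lquot_texp_gen)
qed

lemma rquot_exp_prod:
  "rquot k (exp_prod i j) = (if i \<le> k \<and> k < j then tmul (exp_prod i k) (exp_quot_gen k) else 0)"
proof (induction j)
  case 0
  then show ?case by (simp add: exp_prod_empty)
next
  case (Suc j)
  show ?case
  proof (cases "i \<le> j")
    case True
    then show ?thesis
      using Suc by (auto simp: exp_prod_snoc rquot_tmul rquot_texp_gen)
  qed (auto simp: exp_prod_empty)
qed

text \<open>With \<open>E = exp_prod 1 (Suc n) = e\<^sup>x\<^sup>1\<cdots>e\<^sup>x\<^sup>n\<close>, \<open>Xi_quot n\<close> is \<open>\<Xi>/(E - 1)\<close>.\<close>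

definition Xi_quot :: "nat \<Rightarrow> tser" where
  "Xi_quot n = tsubst_fps ln_quot (exp_prod 1 (Suc n) - tone)"

lemma Xi_eq: "Xi n = tsubst_fps (fps_ln 1) (exp_prod 1 (Suc n) - tone)"
proof -
  have "(\<lambda>k. if k = 0 then 0 else (-1) ^ (k + 1) / of_nat k :: rat) = fps_nth (fps_ln 1)"
  proof
    fix k :: nat
    show "(if k = 0 then 0 else (-1) ^ (k + 1) / of_nat k :: rat) = fps_ln 1 $ k"
      by (cases k) (simp_all add: fps_ln_nth)
  qed
  then show ?thesis
    by (simp add: Xi_def tlog_def exp_prod_def tsubst_fps_def)
qed

lemma Xi_Nil: "Xi n [] = 0"
  by (simp add: Xi_eq tsubst_fps_Nil)

lemma in_T_Xi: "in_T n (Xi n)"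
  unfolding Xi_eq by (intro in_T_tsubst_fps in_T_diff in_T_exp_prod in_T_tone) auto

lemma lquot_Xi:
  assumes "i \<in> {1..n}"
  shows "lquot i (Xi n) = tmul (exp_quot_gen i) (tmul (exp_prod (Suc i) (Suc n)) (Xi_quot n))"
  using assms
  by (simp add: Xi_eq lquot_tsubst_fps lquot_diff lquot_exp_prod tmul_assoc Xi_quot_def
      ln_quot_def)

lemma rquot_Xi:
  assumes "i \<in> {1..n}"
  shows "rquot i (Xi n) = tmul (Xi_quot n) (tmul (exp_prod 1 i) (exp_quot_gen i))"
  using assms
  by (simp add: Xi_eq rquot_tsubst_fps rquot_diff rquot_exp_prod Xi_quot_def ln_quot_def)

lemma Xi_singleton: "k \<in> {1..n} \<Longrightarrow> Xi n [k] = 1"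
  using fun_cong[OF lquot_Xi, of k n "[]"]
  by (simp add: lquot_def Xi_quot_def tsubst_fps_Nil ln_quot_def fps_ln_nth)

lemma tsubst_fps_log_identity:
  assumes L: "L [] = 0"
  shows "tmul (tsubst_fps (1 + fps_X) L) (tsubst_fps ln_quot L)
      + tmul (tsubst_fps s_fps (tsubst_fps (fps_ln 1) L)) (tsubst_fps (fps_ln 1) L) = tone"
    and "tmul (tsubst_fps ln_quot L) (tsubst_fps (1 + fps_X) L)
      + tmul (tsubst_fps (fps_ln 1) L) (tsubst_fps s_fps (tsubst_fps (fps_ln 1) L)) = tone"
  using s_fps_ln_identity
  by (simp_all add: tsubst_fps_compose L mult.commute tsubst_fps_one
      flip: tsubst_fps_mult[where a=L, OF L] tsubst_fps_add)

lemma tsubst_fps_one_plus_X_E: "tsubst_fps (1 + fps_X) (exp_prod i j - tone) = exp_prod i j"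
  by (simp add: tsubst_fps_add tsubst_fps_one tsubst_fps_X)

lemma Xi_identity_left:
  "tmul (exp_prod 1 (Suc n)) (Xi_quot n) + tmul (tsubst_fps s_fps (Xi n)) (Xi n) = tone"
  using tsubst_fps_log_identity(1)[of "exp_prod 1 (Suc n) - tone"]
  unfolding tsubst_fps_one_plus_X_E Xi_eq[symmetric] Xi_quot_def[symmetric] by simp

lemma Xi_identity_right:
  "tmul (Xi_quot n) (exp_prod 1 (Suc n)) + tmul (Xi n) (tsubst_fps s_fps (Xi n)) = tone"
  using tsubst_fps_log_identity(2)[of "exp_prod 1 (Suc n) - tone"]
  unfolding tsubst_fps_one_plus_X_E Xi_eq[symmetric] Xi_quot_def[symmetric] by simp

section \<open>The inverse of \<open>-\<Xi>\<close>\<close>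

definition gen_sum :: "nat \<Rightarrow> nat \<Rightarrow> tser" where
  "gen_sum i j = (\<Sum>k\<in>{i..<j}. gen k)"

lemma gen_sum_empty: "j \<le> i \<Longrightarrow> gen_sum i j = 0"
  by (simp add: gen_sum_def)

lemma gen_sum_Cons: "i < j \<Longrightarrow> gen_sum i j = gen i + gen_sum (Suc i) j"
  by (simp add: gen_sum_def sum.atLeast_Suc_lessThan)

lemma gen_sum_snoc: "i \<le> j \<Longrightarrow> gen_sum i (Suc j) = gen_sum i j + gen j"
  by (simp add: gen_sum_def)

lemma x0_eq_gen_sum: "x0 n = - gen_sum 1 (Suc n)"
  by (simp add: x0_def gen_sum_def atLeastLessThanSuc_atLeastAtMost)

definition lower_prods :: "nat \<Rightarrow> tser" where
  "lower_prods n = (\<Sum>k\<in>{1..n}. \<Sum>l\<in>{1..<k}. tmul (gen k) (gen l))"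

definition s_squares :: "nat \<Rightarrow> tser" where
  "s_squares n = (\<Sum>k\<in>{1..n}. tmul (tsubst s_coeff (gen k)) (tpow (gen k) 2))"

definition rhs :: "nat \<Rightarrow> tser" where
  "rhs n = x0 n - lower_prods n + s_squares n"

lemma s_squares_eq: "s_squares n = (\<Sum>k\<in>{1..n}. tsubst_fps (s_fps * fps_X ^ 2) (gen k))"
  by (simp add: s_squares_def tsubst_s_coeff tsubst_fps_gen_mult tsubst_fps_X_power)

lemma rquot_lower_prods: "i \<in> {1..n} \<Longrightarrow> rquot i (lower_prods n) = gen_sum (Suc i) (Suc n)"
proof -
  assume i: "i \<in> {1..n}"
  have "rquot i (lower_prods n) = (\<Sum>k\<in>{1..n}. \<Sum>l\<in>{1..<k}. if i = l then gen k else 0)"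
    by (simp add: lower_prods_def rquot_sum rquot_tmul rquot_gen if_distrib[of "tmul _"]
        cong: if_cong)
  also have "\<dots> = (\<Sum>k\<in>{1..n}. if i < k then gen k else 0)"
    by (rule sum.cong) (use i in \<open>auto simp: sum.delta\<close>)
  also have "\<dots> = (\<Sum>k\<in>{k\<in>{1..n}. i < k}. gen k)"
    by (rule sum.inter_filter[symmetric]) simp
  also have "{k\<in>{1..n}. i < k} = {Suc i..<Suc n}"
    using i by auto
  finally show ?thesis
    by (simp add: gen_sum_def)
qed

lemma lquot_lower_prods: "i \<in> {1..n} \<Longrightarrow> lquot i (lower_prods n) = gen_sum 1 i"
proof -
  assume i: "i \<in> {1..n}"
  have "lquot i (lower_prods n) = (\<Sum>k\<in>{1..n}. \<Sum>l\<in>{1..<k}. if i = k then gen l else 0)"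
    by (simp add: lower_prods_def lquot_sum lquot_tmul lquot_gen if_distrib[of "\<lambda>a. tmul a _"]
        cong: if_cong)
  also have "\<dots> = (\<Sum>k\<in>{1..n}. if i = k then gen_sum 1 k else 0)"
    by (rule sum.cong) (auto simp: gen_sum_def)
  also have "\<dots> = gen_sum 1 i"
    using i by (simp add: sum.delta)
  finally show ?thesis .
qed

lemma rquot_s_squares: "i \<in> {1..n} \<Longrightarrow> rquot i (s_squares n) = s_times_gen i"
  by (simp add: s_squares_eq rquot_sum rquot_tsubst_fps_gen fps_shift_times_fps_X_power'''
      s_times_gen_def sum.delta)

lemma lquot_s_squares: "i \<in> {1..n} \<Longrightarrow> lquot i (s_squares n) = s_times_gen i"
  by (simp add: s_squares_eq lquot_sum lquot_tsubst_fps_gen fps_shift_times_fps_X_power'''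
      s_times_gen_def sum.delta)

lemma rquot_rhs: "i \<in> {1..n} \<Longrightarrow> rquot i (rhs n) = s_times_gen i - tone - gen_sum (Suc i) (Suc n)"
  by (simp add: rhs_def rquot_add rquot_diff rquot_x0 rquot_lower_prods rquot_s_squares)

lemma lquot_rhs: "i \<in> {1..n} \<Longrightarrow> lquot i (rhs n) = s_times_gen i - tone - gen_sum 1 i"
  by (simp add: rhs_def lquot_add lquot_diff lquot_x0 lquot_lower_prods lquot_s_squares)

lemma rhs_Nil: "rhs n [] = 0"
  by (simp add: rhs_def lower_prods_def s_squares_def sum_fun_apply x0_Nil tpow_eq_0)

lemma in_T_rhs: "in_T n (rhs n)"
  unfolding rhs_def lower_prods_def s_squares_def
  by (intro in_T_add in_T_diff in_T_x0 in_T_sum in_T_tmul in_T_gen in_T_tsubst in_T_tpow) auto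

text \<open>The summands of \<open>rhs \<star> \<Xi>\<close> and \<open>\<Xi> \<star> rhs\<close> telescope, by the identity
  \<open>(1 - s(x) x)(e\<^sup>x - 1) = x e\<^sup>x\<close>.\<close>

lemma rquot_rhs_tmul_gen:
  assumes i: "i \<in> {1..n}"
  shows "tmul (rquot i (rhs n)) (tmul (gen i) (exp_quot_gen i))
    = gen_sum (Suc i) (Suc n) - tmul (gen_sum i (Suc n)) (texp (gen i))"
proof -
  let ?S = "gen_sum (Suc i) (Suc n)" and ?e = "texp (gen i)"
  have "rquot i (rhs n) = - (tone - s_times_gen i) - ?S"
    using i by (simp add: rquot_rhs)
  then have "tmul (rquot i (rhs n)) (tmul (gen i) (exp_quot_gen i))
      = - tmul (tone - s_times_gen i) (?e - tone) - tmul ?S (?e - tone)"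
    by (simp only: gen_tmul_exp_quot_gen tmul_diff_left tmul_uminus_left)
  also have "\<dots> = - tmul (gen i) ?e - (tmul ?S ?e - ?S)"
    by (simp only: s_times_gen_exp) (simp only: tmul_diff_right tmul_tone_right)
  also have "\<dots> = ?S - tmul (gen i + ?S) ?e"
    by (simp add: tmul_add_left)
  finally show ?thesis
    using i by (simp add: gen_sum_Cons)
qed

lemma exp_quot_gen_tmul_lquot_rhs:
  assumes i: "i \<in> {1..n}"
  shows "tmul (exp_quot_gen i) (tmul (gen i) (lquot i (rhs n)))
    = gen_sum 1 i - tmul (texp (gen i)) (gen_sum 1 (Suc i))"
proof -
  let ?S = "gen_sum 1 i" and ?e = "texp (gen i)"
  have "lquot i (rhs n) = - (tone - s_times_gen i) - ?S"
    using i by (simp add: lquot_rhs)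
  then have "tmul (exp_quot_gen i) (tmul (gen i) (lquot i (rhs n)))
      = - tmul (?e - tone) (tone - s_times_gen i) - tmul (?e - tone) ?S"
    by (simp only: exp_quot_gen_tmul_gen tmul_diff_right tmul_uminus_right flip: tmul_assoc)
  also have "\<dots> = - tmul ?e (gen i) - (tmul ?e ?S - ?S)"
    by (simp only: exp_s_times_gen) (simp only: tmul_diff_left tmul_tone_left)
  also have "\<dots> = ?S - tmul ?e (?S + gen i)"
    by (simp add: tmul_add_right)
  finally show ?thesis
    using i by (simp add: gen_sum_snoc)
qed

lemma star_rhs_Xi:
  "star (rhs n) (Xi n) = tmul (gen_sum 1 (Suc n)) (tmul (exp_prod 1 (Suc n)) (Xi_quot n))"
proof -
  define F where "F j = tmul (gen_sum j (Suc n)) (tmul (exp_prod j (Suc n)) (Xi_quot n))" for j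
  have "tmul (rquot i (rhs n)) (tmul (gen i) (lquot i (Xi n))) = F (Suc i) - F i"
    if i: "i \<in> {1..n}" for i
  proof -
    have "tmul (rquot i (rhs n)) (tmul (gen i) (lquot i (Xi n)))
        = tmul (tmul (rquot i (rhs n)) (tmul (gen i) (exp_quot_gen i)))
            (tmul (exp_prod (Suc i) (Suc n)) (Xi_quot n))"
      using i by (simp add: lquot_Xi tmul_assoc)
    also have "\<dots> = F (Suc i) - F i"
      using i by (simp only: rquot_rhs_tmul_gen F_def tmul_diff_left tmul_assoc)
        (simp add: exp_prod_Cons tmul_assoc)
    finally show ?thesis .
  qed
  then have "star (rhs n) (Xi n) = - (\<Sum>i = 1..n. F (Suc i) - F i)"
    by (simp add: star_eq_sum_quot[OF in_T_Xi])
  also have "\<dots> = F 1 - F (Suc n)"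
    by (simp add: sum_Suc_diff)
  also have "F (Suc n) = 0"
    by (simp add: F_def gen_sum_empty)
  finally show ?thesis
    by (simp add: F_def)
qed

lemma star_Xi_rhs:
  "star (Xi n) (rhs n) = tmul (Xi_quot n) (tmul (exp_prod 1 (Suc n)) (gen_sum 1 (Suc n)))"
proof -
  define H where "H j = tmul (Xi_quot n) (tmul (exp_prod 1 j) (gen_sum 1 j))" for j
  have "tmul (rquot i (Xi n)) (tmul (gen i) (lquot i (rhs n))) = H i - H (Suc i)"
    if i: "i \<in> {1..n}" for i
  proof -
    have "tmul (rquot i (Xi n)) (tmul (gen i) (lquot i (rhs n)))
        = tmul (Xi_quot n) (tmul (exp_prod 1 i) (tmul (exp_quot_gen i) (tmul (gen i) (lquot i (rhs n)))))"
      using i by (simp add: rquot_Xi tmul_assoc)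
    also have "\<dots> = H i - H (Suc i)"
      using i by (simp only: exp_quot_gen_tmul_lquot_rhs H_def tmul_diff_right)
        (simp add: exp_prod_snoc tmul_assoc)
    finally show ?thesis .
  qed
  then have "star (Xi n) (rhs n) = (\<Sum>i = 1..n. H (Suc i) - H i)"
    by (simp add: star_eq_sum_quot[OF in_T_rhs] sum_negf[symmetric])
  also have "\<dots> = H (Suc n) - H 1"
    by (simp add: sum_Suc_diff)
  also have "H 1 = 0"
    by (simp add: H_def gen_sum_empty)
  finally show ?thesis
    by (simp add: H_def)
qed

lemma in_T_s_Xi: "in_T n (tsubst_fps s_fps (Xi n))"
  by (intro in_T_tsubst_fps in_T_Xi)

lemma star_rhs_diff_neg_Xi:
  "star (rhs n - tmul (tmul (x0 n) (tsubst_fps s_fps (Xi n))) (x0 n)) (- Xi n) = x0 n"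
proof -
  let ?s = "tsubst_fps s_fps (Xi n)"
  have "star (rhs n - tmul (tmul (x0 n) ?s) (x0 n)) (- Xi n)
      = - star (rhs n) (Xi n) + star (tmul (tmul (x0 n) ?s) (x0 n)) (Xi n)"
    by (simp add: star_diff_left star_uminus_right)
  also have "star (tmul (tmul (x0 n) ?s) (x0 n)) (Xi n) = tmul (tmul (x0 n) ?s) (Xi n)"
    by (rule star_tmul_x0_left[OF in_T_Xi Xi_Nil])
  also have "- star (rhs n) (Xi n) = tmul (x0 n) (tmul (exp_prod 1 (Suc n)) (Xi_quot n))"
    by (simp add: star_rhs_Xi x0_eq_gen_sum tmul_uminus_left)
  finally have "star (rhs n - tmul (tmul (x0 n) ?s) (x0 n)) (- Xi n)
      = tmul (x0 n) (tmul (exp_prod 1 (Suc n)) (Xi_quot n) + tmul ?s (Xi n))"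
    by (simp only: tmul_add_right tmul_assoc)
  also have "\<dots> = x0 n"
    by (simp only: Xi_identity_left tmul_tone_right)
  finally show ?thesis .
qed

lemma star_neg_Xi_rhs_diff:
  "star (- Xi n) (rhs n - tmul (tmul (x0 n) (tsubst_fps s_fps (Xi n))) (x0 n)) = x0 n"
proof -
  let ?s = "tsubst_fps s_fps (Xi n)"
  have "star (- Xi n) (rhs n - tmul (tmul (x0 n) ?s) (x0 n))
      = - star (Xi n) (rhs n) + star (Xi n) (tmul (x0 n) (tmul ?s (x0 n)))"
    by (simp add: star_diff_right star_uminus_left tmul_assoc)
  also have "star (Xi n) (tmul (x0 n) (tmul ?s (x0 n))) = tmul (Xi n) (tmul ?s (x0 n))"
    by (intro star_tmul_x0_right in_T_Xi Xi_Nil in_T_tmul in_T_s_Xi in_T_x0)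
  also have "- star (Xi n) (rhs n) = tmul (tmul (Xi_quot n) (exp_prod 1 (Suc n))) (x0 n)"
    by (simp add: star_Xi_rhs x0_eq_gen_sum tmul_uminus_right tmul_assoc)
  finally have "star (- Xi n) (rhs n - tmul (tmul (x0 n) ?s) (x0 n))
      = tmul (tmul (Xi_quot n) (exp_prod 1 (Suc n)) + tmul (Xi n) ?s) (x0 n)"
    by (simp only: tmul_add_left tmul_assoc)
  also have "\<dots> = x0 n"
    by (simp only: Xi_identity_right tmul_tone_left)
  finally show ?thesis .
qed

lemma star_inv_neg_Xi:
  "star_inv n (- Xi n) = rhs n - tmul (tmul (x0 n) (tsubst_fps s_fps (Xi n))) (x0 n)"
  unfolding star_inv_def
proof (rule the_equality)
  let ?Z = "rhs n - tmul (tmul (x0 n) (tsubst_fps s_fps (Xi n))) (x0 n)"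
  have in_T_Z: "in_T n ?Z"
    by (intro in_T_diff in_T_rhs in_T_tmul in_T_x0 in_T_s_Xi)
  have Z_Nil: "?Z [] = 0"
    by (simp add: rhs_Nil x0_Nil)
  show "in_T n ?Z \<and> ?Z [] = 0 \<and> star ?Z (- Xi n) = x0 n \<and> star (- Xi n) ?Z = x0 n"
    using in_T_Z Z_Nil star_rhs_diff_neg_Xi star_neg_Xi_rhs_diff by blast
  fix Z
  assume Z: "in_T n Z \<and> Z [] = 0 \<and> star Z (- Xi n) = x0 n \<and> star (- Xi n) Z = x0 n"
  have "Z - ?Z = 0"
  proof (rule star_left_cancel)
    show "in_T n (Z - ?Z)"
      using Z in_T_Z by (simp add: in_T_diff)
    show "(Z - ?Z) [] = 0"
      using Z Z_Nil by simp
    show "star (Z - ?Z) (- Xi n) = 0"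
      using Z star_rhs_diff_neg_Xi by (simp only: star_diff_left) simp
    show "(- Xi n) [k] \<noteq> 0" if "k \<in> {1..n}" for k
      using that by (simp add: Xi_singleton)
  qed
  then show "Z = ?Z"
    by simp
qed

lemma tsubst_q_coeff_gen: "tsubst q_coeff (gen k) = tsubst_fps (s_fps * fps_X ^ 2) (gen k) - gen k"
  by (simp add: tsubst_q_coeff q_fps_eq tsubst_fps_diff tsubst_fps_X_gen)

lemma sum_tsubst_q_coeff: "(\<Sum>k\<in>{1..n}. tsubst q_coeff (gen k)) = s_squares n + x0 n"
  by (simp add: tsubst_q_coeff_gen s_squares_eq sum_subtractf x0_def)

theorem theorem3p1:
  fixes n :: nat
  assumes "n \<ge> 1"
  shows "star_inv n (- Xi n) + tmul (tmul (x0 n) (tsubst s_coeff (Xi n))) (x0 n)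
           = x0 n - (\<Sum>k\<in>{1..n}. \<Sum>l\<in>{1..<k}. tmul (gen k) (gen l))
               + (\<Sum>k\<in>{1..n}. tmul (tsubst s_coeff (gen k)) (tpow (gen k) 2))
       \<and> x0 n - (\<Sum>k\<in>{1..n}. \<Sum>l\<in>{1..<k}. tmul (gen k) (gen l))
               + (\<Sum>k\<in>{1..n}. tmul (tsubst s_coeff (gen k)) (tpow (gen k) 2))
           = - (\<Sum>k\<in>{1..n}. \<Sum>l\<in>{1..<k}. tmul (gen k) (gen l))
               + (\<Sum>k\<in>{1..n}. tsubst q_coeff (gen k))"
proof -
  have "star_inv n (- Xi n) + tmul (tmul (x0 n) (tsubst s_coeff (Xi n))) (x0 n) = rhs n"
    by (simp add: star_inv_neg_Xi tsubst_s_coeff)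
  moreover have "rhs n = - lower_prods n + (\<Sum>k\<in>{1..n}. tsubst q_coeff (gen k))"
    unfolding rhs_def sum_tsubst_q_coeff by (simp add: algebra_simps)
  ultimately show ?thesis
    by (simp only: rhs_def lower_prods_def s_squares_def)
qed

end
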